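(* Let $0<p,s<\infty$ and let $\mu$ be a finite positive Borel measure on $\mathbb{B}_n$. If a family $\mathcal{G}$ of functions in $T^p_s(\mu)$ is relatively compact in $T^p_s(\mu)$, then for every $\varepsilon>0$ there exists $r\in(0,1)$ such that $$\sup_{g\in\mathcal{G}}\int_{\mathbb{S}_n}\left(\int_{\Gamma(\zeta)\setminus\overline{B(0,r)}}|g(z)|^s\,d\mu(z)\right)^{p/s}d\sigma(\zeta)<\varepsilon.$$
   Context: $\mathbb{B}_n$ is the open unit ball of $\mathbb{C}^n$, $\mathbb{S}_n$ its boundary sphere with normalized surface measure $\sigma$, $\langle z,w\rangle=\sum z_i\bar w_i$, $B(0,r)$ the Euclidean ball of radius $r$ about $0$. Fix an aperture $\alpha>1$ and let $\Gamma(\zeta)=\{z\in\mathbb{B}_n:|1-\langle z,\zeta\rangle|<\alpha(1-|z|)\}$. The tent space $T^p_s(\mu)$ consists of measurable $g$ on $\mathbb{B}_n$ with $\|g\|^p_{T^p_s(\mu)}=\int_{\mathbb{S}_n}\left(\int_{\Gamma(\zeta)}|g(z)|^s\,d\mu(z)\right)^{p/s}d\sigma(\zeta)<\infty$. *)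

theory Defs
  imports "HOL-Analysis.Analysis"
begin

text \<open>C^n is modelled as complex^'n for a finite index type 'n (n = CARD('n) >= 1).\<close>

definition herm :: "complex^'n \<Rightarrow> complex^'n \<Rightarrow> complex" where
  "herm z w = (\<Sum>i\<in>UNIV. z $ i * cnj (w $ i))"

definition epowr :: "ennreal \<Rightarrow> real \<Rightarrow> ennreal" where
  "epowr x a = (if x = (\<infinity>::ennreal) then (\<infinity>::ennreal) else ennreal (enn2real x powr a))"

text \<open>Normalized surface measure on the unit sphere, realised as a Borel measure on C^n
  concentrated on the sphere: the push-forward of normalized Lebesgue measure on the
  unit ball under the radial projection x \<mapsto> x/|x|.\<close>
definition sphere_sigma :: "(complex^'n) measure" where
  "sphere_sigma = distr (uniform_measure lborel (ball 0 1)) borel (\<lambda>x. x /\<^sub>R norm x)"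

definition Gamma_region :: "real \<Rightarrow> complex^'n \<Rightarrow> (complex^'n) set" where
  "Gamma_region \<alpha> \<zeta> = {z \<in> ball 0 1. cmod (1 - herm z \<zeta>) < \<alpha> * (1 - norm z)}"

definition tent_int ::
  "real \<Rightarrow> real \<Rightarrow> real \<Rightarrow> (complex^'n) measure \<Rightarrow> (complex^'n) set \<Rightarrow> (complex^'n \<Rightarrow> complex) \<Rightarrow> ennreal" where
  "tent_int \<alpha> p s \<mu> E g =
     (\<integral>\<^sup>+ \<zeta>. epowr (\<integral>\<^sup>+ z. indicator (Gamma_region \<alpha> \<zeta> \<inter> E) z * ennreal (cmod (g z) powr s) \<partial>\<mu>) (p / s)
        \<partial>sphere_sigma)"

definition tent_space ::
  "real \<Rightarrow> real \<Rightarrow> real \<Rightarrow> (complex^'n) measure \<Rightarrow> (complex^'n \<Rightarrow> complex) set" where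
  "tent_space \<alpha> p s \<mu> = {g. g \<in> borel_measurable \<mu> \<and> tent_int \<alpha> p s \<mu> UNIV g < \<infinity>}"

definition tent_rel_compact ::
  "real \<Rightarrow> real \<Rightarrow> real \<Rightarrow> (complex^'n) measure \<Rightarrow> (complex^'n \<Rightarrow> complex) set \<Rightarrow> bool" where
  "tent_rel_compact \<alpha> p s \<mu> G \<longleftrightarrow>
     (\<forall>f :: nat \<Rightarrow> complex^'n \<Rightarrow> complex. (\<forall>k. f k \<in> G) \<longrightarrow>
        (\<exists>h r. h \<in> tent_space \<alpha> p s \<mu> \<and> strict_mono (r :: nat \<Rightarrow> nat) \<and>
           (\<lambda>k. tent_int \<alpha> p s \<mu> UNIV (\<lambda>z. f (r k) z - h z)) \<longlonglongrightarrow> 0))"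

end

theory Submission
  imports Defs
begin

text \<open>
  Write \<open>T\<^sub>E(g)\<close> for \<open>tent_int \<alpha> p s \<mu> E g\<close> and \<open>T\<close> for \<open>T\<^sub>U\<^sub>N\<^sub>I\<^sub>V\<close>. The quasi-triangle
  inequality \<open>T\<^sub>E(g) \<le> C (T(g - h) + T\<^sub>E(h))\<close> holds with \<open>C\<close> depending only on \<open>p\<close>, \<open>s\<close>.
  For a single \<open>h\<close> of finite tent functional the tails \<open>T\<^sub>E\<^sub>k(h)\<close> vanish whenever
  the Borel sets \<open>E\<^sub>k\<close> eventually avoid each point of the unit ball: apply dominated
  convergence to the inner integral over \<open>\<Gamma>(\<zeta>) \<subseteq> B(0,1)\<close> for almost every \<open>\<zeta>\<close>,
  then to the outer integral over the sphere.
  If the theorem failed, there would be \<open>g\<^sub>k \<in> G\<close> whose tails beyond radii \<open>r\<^sub>k \<rightarrow> 1\<close>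
  stay above \<open>\<epsilon>/2\<close>; a subsequence converges to some \<open>h\<close>, and the quasi-triangle
  inequality bounds those tails by the distance to \<open>h\<close> plus the tails of \<open>h\<close>.
\<close>

lemma powr_add_le_two_powr:
  fixes a b q :: real
  assumes "0 \<le> a" "0 \<le> b" "0 < q"
  shows "(a + b) powr q \<le> 2 powr q * (a powr q + b powr q)"
proof -
  have "(a + b) powr q \<le> (2 * max a b) powr q"
    using assms by (intro powr_mono2) auto
  also have "\<dots> = 2 powr q * max a b powr q"
    using assms by (simp add: powr_mult)
  also have "max a b powr q \<le> a powr q + b powr q"
    using assms by (auto simp: max_def)
  finally show ?thesis
    by (simp add: mult_left_mono)
qed

lemma measurable_epowr [measurable]:
  assumes [measurable]: "F \<in> borel_measurable M"
  shows "(\<lambda>x. epowr (F x) q) \<in> borel_measurable M"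
  unfolding epowr_def by measurable

lemma epowr_eq_top_iff [simp]: "epowr x q = top \<longleftrightarrow> x = top"
  by (simp add: epowr_def)

lemma epowr_top [simp]: "epowr top q = top"
  by (simp add: epowr_def)

lemma epowr_zero [simp]: "epowr 0 q = 0"
  by (simp add: epowr_def)

lemma epowr_ennreal [simp]: "0 \<le> a \<Longrightarrow> epowr (ennreal a) q = ennreal (a powr q)"
  by (simp add: epowr_def)

lemma epowr_mono:
  assumes "x \<le> y" "0 \<le> q"
  shows "epowr x q \<le> epowr y q"
proof (cases "y = \<infinity>")
  case False
  with assms(1) have "x \<noteq> \<infinity>"
    by (auto simp: top_unique)
  then obtain a where a: "x = ennreal a" "0 \<le> a"
    by (cases x rule: ennreal_cases) auto
  obtain b where b: "y = ennreal b" "0 \<le> b"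
    using False by (cases y rule: ennreal_cases) auto
  from assms(1) a b have "a \<le> b"
    by (simp add: ennreal_le_iff)
  with a b assms(2) show ?thesis
    by (simp add: powr_mono2)
qed simp

lemma epowr_cmult:
  assumes "0 \<le> c"
  shows "epowr (ennreal c * x) q = ennreal (c powr q) * epowr x q"
proof (cases "x = \<infinity>")
  case True
  then show ?thesis
    using assms by (cases "c = 0") (simp_all add: ennreal_mult_top)
next
  case False
  then obtain a where "x = ennreal a" "0 \<le> a"
    by (cases x rule: ennreal_cases) auto
  with assms show ?thesis
    by (simp add: ennreal_mult [symmetric] powr_mult)
qed

lemma epowr_add_le:
  assumes "0 < q"
  shows "epowr (x + y) q \<le> ennreal (2 powr q) * (epowr x q + epowr y q)"
proof (cases "x = \<infinity> \<or> y = \<infinity>")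
  case True
  then show ?thesis
    by (elim disjE) (simp_all add: ennreal_mult_top)
next
  case False
  obtain a where a: "x = ennreal a" "0 \<le> a"
    using False by (cases x rule: ennreal_cases) auto
  obtain b where b: "y = ennreal b" "0 \<le> b"
    using False by (cases y rule: ennreal_cases) auto
  note ab = a b
  have "(a + b) powr q \<le> 2 powr q * (a powr q + b powr q)"
    using ab(2,4) assms by (rule powr_add_le_two_powr)
  with ab show ?thesis
    by (simp add: ennreal_plus [symmetric] ennreal_mult [symmetric] ennreal_leI del: ennreal_plus)
qed

lemma epowr_tendsto_zero:
  assumes "X \<longlonglongrightarrow> 0" "0 < q"
  shows "(\<lambda>k. epowr (X k) q) \<longlonglongrightarrow> 0"
proof -
  have "eventually (\<lambda>k. X k < \<infinity>) sequentially"
    using assms(1) by (rule order_tendstoD) simp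
  then have "eventually (\<lambda>k. ennreal (enn2real (X k) powr q) = epowr (X k) q) sequentially"
    by eventually_elim (simp add: epowr_def)
  moreover have "(\<lambda>k. ennreal (enn2real (X k) powr q)) \<longlonglongrightarrow> ennreal 0"
    using assms by (intro tendsto_ennrealI tendsto_zero_powrI[where b = q] tendsto_enn2real[of X 0, simplified]) auto
  ultimately show ?thesis
    by (simp add: tendsto_cong)
qed

lemma Gamma_region_subset_ball: "Gamma_region \<alpha> \<zeta> \<subseteq> ball 0 1"
  by (auto simp: Gamma_region_def)

lemma open_Gamma_region_graph: "open {(\<zeta>, z). z \<in> Gamma_region \<alpha> \<zeta>}"
proof -
  have "{(\<zeta>, z). z \<in> Gamma_region \<alpha> \<zeta>} =
      {x. norm (snd x) < 1} \<inter>
      {x. cmod (1 - (\<Sum>i\<in>UNIV. snd x $ i * cnj (fst x $ i))) < \<alpha> * (1 - norm (snd x))}"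
    by (auto simp: Gamma_region_def herm_def)
  also have "open \<dots>"
    by (intro open_Int open_Collect_less continuous_intros)
  finally show ?thesis .
qed

lemma open_Gamma_region: "open (Gamma_region \<alpha> \<zeta>)"
proof -
  have "Gamma_region \<alpha> \<zeta> = Pair \<zeta> -` {(\<zeta>, z). z \<in> Gamma_region \<alpha> \<zeta>}"
    by auto
  also have "open \<dots>"
    by (intro open_vimage open_Gamma_region_graph continuous_intros)
  finally show ?thesis .
qed

definition Gamma_integral ::
  "real \<Rightarrow> real \<Rightarrow> (complex^'n) measure \<Rightarrow> (complex^'n) set \<Rightarrow> (complex^'n \<Rightarrow> complex) \<Rightarrow> complex^'n \<Rightarrow> ennreal"
  where "Gamma_integral \<alpha> s \<mu> E g \<zeta> =
    (\<integral>\<^sup>+ z. indicator (Gamma_region \<alpha> \<zeta> \<inter> E) z * ennreal (cmod (g z) powr s) \<partial>\<mu>)"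

lemma tent_int_eq_Gamma_integral:
  "tent_int \<alpha> p s \<mu> E g = (\<integral>\<^sup>+ \<zeta>. epowr (Gamma_integral \<alpha> s \<mu> E g \<zeta>) (p / s) \<partial>sphere_sigma)"
  by (simp add: tent_int_def Gamma_integral_def)

lemma Gamma_integral_mono:
  "E \<subseteq> F \<Longrightarrow> Gamma_integral \<alpha> s \<mu> E g \<zeta> \<le> Gamma_integral \<alpha> s \<mu> F g \<zeta>"
  unfolding Gamma_integral_def by (intro nn_integral_mono) (auto simp: indicator_def)

lemma measurable_Gamma_integral:
  assumes "sigma_finite_measure \<mu>" and sets: "sets \<mu> = sets borel"
    and E: "E \<in> sets borel" and g: "g \<in> borel_measurable \<mu>"
  shows "Gamma_integral \<alpha> s \<mu> E g \<in> borel_measurable sphere_sigma"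
proof -
  interpret sigma_finite_measure \<mu> by fact
  have "{(\<zeta>, z). z \<in> Gamma_region \<alpha> \<zeta>} \<in> sets (borel \<Otimes>\<^sub>M borel)"
    unfolding borel_prod using open_Gamma_region_graph by (rule borel_open)
  then have "{(\<zeta>, z). z \<in> Gamma_region \<alpha> \<zeta>} \<in> sets (borel \<Otimes>\<^sub>M \<mu>)"
    by (simp add: sets_pair_measure_cong[OF refl sets])
  moreover have "E \<in> sets \<mu>"
    using E sets by simp
  ultimately have "(\<lambda>x. indicator {(\<zeta>, z). z \<in> Gamma_region \<alpha> \<zeta>} x *
      (indicator E (snd x) * ennreal (cmod (g (snd x)) powr s))) \<in> borel_measurable (borel \<Otimes>\<^sub>M \<mu>)"
    using g by measurable
  then have "(\<lambda>(\<zeta>, z). indicator (Gamma_region \<alpha> \<zeta> \<inter> E) z * ennreal (cmod (g z) powr s))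
      \<in> borel_measurable (borel \<Otimes>\<^sub>M \<mu>)"
    by (rule measurable_cong[THEN iffD1, rotated]) (auto simp: indicator_def)
  then have "Gamma_integral \<alpha> s \<mu> E g \<in> borel_measurable borel"
    unfolding Gamma_integral_def[abs_def] by (rule borel_measurable_nn_integral)
  then show ?thesis
    by (simp add: sphere_sigma_def)
qed

lemma Gamma_integral_triangle:
  assumes sets: "sets \<mu> = sets borel" and "E \<in> sets borel" "0 < s"
    and [measurable]: "g \<in> borel_measurable \<mu>" "h \<in> borel_measurable \<mu>"
  shows "Gamma_integral \<alpha> s \<mu> E g \<zeta> \<le>
    ennreal (2 powr s) * (Gamma_integral \<alpha> s \<mu> UNIV (\<lambda>z. g z - h z) \<zeta> + Gamma_integral \<alpha> s \<mu> E h \<zeta>)"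
proof -
  have [measurable]: "Gamma_region \<alpha> \<zeta> \<in> sets \<mu>" "E \<in> sets \<mu>"
    using open_Gamma_region \<open>E \<in> sets borel\<close> by (auto simp: sets intro: borel_open)
  let ?D = "\<lambda>z. indicator (Gamma_region \<alpha> \<zeta> \<inter> UNIV) z * ennreal (cmod (g z - h z) powr s)"
  let ?H = "\<lambda>z. indicator (Gamma_region \<alpha> \<zeta> \<inter> E) z * ennreal (cmod (h z) powr s)"
  have "indicator (Gamma_region \<alpha> \<zeta> \<inter> E) z * ennreal (cmod (g z) powr s) \<le>
      ennreal (2 powr s) * (?D z + ?H z)" for z
  proof (cases "z \<in> Gamma_region \<alpha> \<zeta> \<inter> E")
    case True
    have "cmod (g z) powr s \<le> (cmod (g z - h z) + cmod (h z)) powr s"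
      using norm_triangle_ineq[of "g z - h z" "h z"] \<open>0 < s\<close> by (intro powr_mono2) auto
    also have "\<dots> \<le> 2 powr s * (cmod (g z - h z) powr s + cmod (h z) powr s)"
      using \<open>0 < s\<close> by (intro powr_add_le_two_powr) auto
    finally have "ennreal (cmod (g z) powr s) \<le>
        ennreal (2 powr s * (cmod (g z - h z) powr s + cmod (h z) powr s))"
      by (rule ennreal_leI)
    then show ?thesis
      using True by (simp add: ennreal_mult' ennreal_plus [symmetric] del: ennreal_plus)
  qed simp
  then have "Gamma_integral \<alpha> s \<mu> E g \<zeta> \<le> (\<integral>\<^sup>+ z. ennreal (2 powr s) * (?D z + ?H z) \<partial>\<mu>)"
    unfolding Gamma_integral_def by (rule nn_integral_mono)
  also have "\<dots> = ennreal (2 powr s) * ((\<integral>\<^sup>+ z. ?D z \<partial>\<mu>) + (\<integral>\<^sup>+ z. ?H z \<partial>\<mu>))"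
    by (simp add: nn_integral_cmult nn_integral_add)
  finally show ?thesis
    by (simp add: Gamma_integral_def)
qed

lemma tent_int_triangle:
  assumes "sigma_finite_measure \<mu>" "sets \<mu> = sets borel" "E \<in> sets borel" "0 < p" "0 < s"
    and [measurable]: "g \<in> borel_measurable \<mu>" "h \<in> borel_measurable \<mu>"
  shows "tent_int \<alpha> p s \<mu> E g \<le>
    ennreal (2 powr (p + p / s)) * (tent_int \<alpha> p s \<mu> UNIV (\<lambda>z. g z - h z) + tent_int \<alpha> p s \<mu> E h)"
proof -
  let ?D = "Gamma_integral \<alpha> s \<mu> UNIV (\<lambda>z. g z - h z)"
  let ?H = "Gamma_integral \<alpha> s \<mu> E h"
  have [measurable]: "?D \<in> borel_measurable sphere_sigma"
    using assms(1,2) by (rule measurable_Gamma_integral) auto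
  have [measurable]: "?H \<in> borel_measurable sphere_sigma"
    using assms(1-3) by (rule measurable_Gamma_integral) auto
  have "epowr (Gamma_integral \<alpha> s \<mu> E g \<zeta>) (p / s) \<le>
      ennreal (2 powr (p + p / s)) * (epowr (?D \<zeta>) (p / s) + epowr (?H \<zeta>) (p / s))" for \<zeta>
  proof -
    have "epowr (Gamma_integral \<alpha> s \<mu> E g \<zeta>) (p / s) \<le> epowr (ennreal (2 powr s) * (?D \<zeta> + ?H \<zeta>)) (p / s)"
      using assms(2-7) by (intro epowr_mono Gamma_integral_triangle) auto
    also have "\<dots> = ennreal (2 powr p) * epowr (?D \<zeta> + ?H \<zeta>) (p / s)"
      using \<open>0 < s\<close> by (simp add: epowr_cmult powr_powr)
    also have "\<dots> \<le> ennreal (2 powr p) *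
        (ennreal (2 powr (p / s)) * (epowr (?D \<zeta>) (p / s) + epowr (?H \<zeta>) (p / s)))"
      using assms by (intro mult_left_mono epowr_add_le) auto
    also have "\<dots> = ennreal (2 powr (p + p / s)) * (epowr (?D \<zeta>) (p / s) + epowr (?H \<zeta>) (p / s))"
      by (simp add: powr_add ennreal_mult mult.assoc)
    finally show ?thesis .
  qed
  then have "tent_int \<alpha> p s \<mu> E g \<le> (\<integral>\<^sup>+ \<zeta>. ennreal (2 powr (p + p / s)) *
      (epowr (?D \<zeta>) (p / s) + epowr (?H \<zeta>) (p / s)) \<partial>sphere_sigma)"
    unfolding tent_int_eq_Gamma_integral by (rule nn_integral_mono)
  also have "\<dots> = ennreal (2 powr (p + p / s)) *
      (tent_int \<alpha> p s \<mu> UNIV (\<lambda>z. g z - h z) + tent_int \<alpha> p s \<mu> E h)"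
    by (simp add: tent_int_eq_Gamma_integral nn_integral_cmult nn_integral_add)
  finally show ?thesis .
qed

lemma Gamma_integral_tendsto_zero:
  assumes sets: "sets \<mu> = sets borel" and E: "\<And>k. E k \<in> sets borel"
    and leave: "\<And>z. z \<in> ball 0 1 \<Longrightarrow> eventually (\<lambda>k. z \<notin> E k) sequentially"
    and [measurable]: "h \<in> borel_measurable \<mu>"
    and fin: "Gamma_integral \<alpha> s \<mu> UNIV h \<zeta> < \<infinity>"
  shows "(\<lambda>k. Gamma_integral \<alpha> s \<mu> (E k) h \<zeta>) \<longlonglongrightarrow> 0"
proof -
  have [measurable]: "Gamma_region \<alpha> \<zeta> \<in> sets \<mu>" "E k \<in> sets \<mu>" for k
    using open_Gamma_region E by (auto simp: sets intro: borel_open)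
  let ?u = "\<lambda>k z. indicator (Gamma_region \<alpha> \<zeta> \<inter> E k) z * ennreal (cmod (h z) powr s)"
  have "(\<lambda>k. ?u k z) \<longlonglongrightarrow> 0" for z
  proof (cases "z \<in> Gamma_region \<alpha> \<zeta>")
    case True
    then have "eventually (\<lambda>k. z \<notin> E k) sequentially"
      using leave Gamma_region_subset_ball by blast
    then have "eventually (\<lambda>k. ?u k z = 0) sequentially"
      by eventually_elim simp
    then show ?thesis
      by (rule tendsto_eventually)
  qed simp
  then have "(\<lambda>k. \<integral>\<^sup>+ z. ?u k z \<partial>\<mu>) \<longlonglongrightarrow> (\<integral>\<^sup>+ z. 0 \<partial>\<mu>)"
    using fin by (intro nn_integral_dominated_convergence
        [where w = "\<lambda>z. indicator (Gamma_region \<alpha> \<zeta>) z * ennreal (cmod (h z) powr s)"])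
      (auto simp: Gamma_integral_def indicator_def)
  then show ?thesis
    by (simp add: Gamma_integral_def)
qed

lemma tent_int_tendsto_zero:
  fixes \<mu> :: "(complex^'n) measure"
  assumes "sigma_finite_measure \<mu>" "sets \<mu> = sets borel" "0 < p" "0 < s"
    and E: "\<And>k. E k \<in> sets borel"
    and leave: "\<And>z. z \<in> ball 0 1 \<Longrightarrow> eventually (\<lambda>k. z \<notin> E k) sequentially"
    and "h \<in> tent_space \<alpha> p s \<mu>"
  shows "(\<lambda>k. tent_int \<alpha> p s \<mu> (E k) h) \<longlonglongrightarrow> 0"
proof -
  have h: "h \<in> borel_measurable \<mu>" and fin: "tent_int \<alpha> p s \<mu> UNIV h < \<infinity>"
    using \<open>h \<in> tent_space \<alpha> p s \<mu>\<close> by (auto simp: tent_space_def)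
  let ?I = "\<lambda>E \<zeta>. epowr (Gamma_integral \<alpha> s \<mu> E h \<zeta>) (p / s)"
  have measurable_I_UNIV [measurable]: "?I UNIV \<in> borel_measurable sphere_sigma"
    by (intro measurable_epowr measurable_Gamma_integral[OF assms(1,2) _ h]) simp
  have measurable_I [measurable]: "?I (E k) \<in> borel_measurable sphere_sigma" for k
    by (intro measurable_epowr measurable_Gamma_integral[OF assms(1,2) E h])
  have "AE \<zeta> in sphere_sigma. ?I UNIV \<zeta> \<noteq> \<infinity>"
    using fin by (intro nn_integral_PInf_AE) (auto simp: tent_int_eq_Gamma_integral)
  then have conv: "AE \<zeta> in sphere_sigma. (\<lambda>k. ?I (E k) \<zeta>) \<longlonglongrightarrow> 0"
  proof eventually_elim
    case (elim \<zeta>)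
    then have "Gamma_integral \<alpha> s \<mu> UNIV h \<zeta> < \<infinity>"
      by (simp add: less_top)
    then show ?case
      using assms(3,4) by (intro epowr_tendsto_zero Gamma_integral_tendsto_zero[OF assms(2) E leave h]) auto
  qed
  have "(\<lambda>k. \<integral>\<^sup>+ \<zeta>. ?I (E k) \<zeta> \<partial>sphere_sigma) \<longlonglongrightarrow> (\<integral>\<^sup>+ \<zeta>. 0 \<partial>(sphere_sigma :: (complex^'n) measure))"
  proof (rule nn_integral_dominated_convergence[where w = "?I UNIV"])
    show "AE \<zeta> in sphere_sigma. ?I (E k) \<zeta> \<le> ?I UNIV \<zeta>" for k
      using assms(3,4) by (intro AE_I2 epowr_mono Gamma_integral_mono) auto
    show "(\<integral>\<^sup>+ \<zeta>. ?I UNIV \<zeta> \<partial>sphere_sigma) < \<infinity>"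
      using fin by (simp add: tent_int_eq_Gamma_integral)
  qed (fact conv measurable_I measurable_I_UNIV | simp)+
  then show ?thesis
    by (simp add: tent_int_eq_Gamma_integral)
qed

lemma tent_int_tendsto_zero_of_convergent:
  assumes "sigma_finite_measure \<mu>" "sets \<mu> = sets borel" "0 < p" "0 < s"
    and E: "\<And>k. E k \<in> sets borel"
    and leave: "\<And>z. z \<in> ball 0 1 \<Longrightarrow> eventually (\<lambda>k. z \<notin> E k) sequentially"
    and f: "\<And>k. f k \<in> borel_measurable \<mu>" and h: "h \<in> tent_space \<alpha> p s \<mu>"
    and conv: "(\<lambda>k. tent_int \<alpha> p s \<mu> UNIV (\<lambda>z. f k z - h z)) \<longlonglongrightarrow> 0"
  shows "(\<lambda>k. tent_int \<alpha> p s \<mu> (E k) (f k)) \<longlonglongrightarrow> 0"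
proof -
  define K where "K = ennreal (2 powr (p + p / s))"
  have lim: "(\<lambda>k. K * (tent_int \<alpha> p s \<mu> UNIV (\<lambda>z. f k z - h z) + tent_int \<alpha> p s \<mu> (E k) h))
      \<longlonglongrightarrow> K * (0 + 0)"
    by (intro ennreal_tendsto_cmult tendsto_add conv tent_int_tendsto_zero[OF assms(1-6) h])
      (simp add: K_def)
  have bound: "tent_int \<alpha> p s \<mu> (E k) (f k) \<le>
      K * (tent_int \<alpha> p s \<mu> UNIV (\<lambda>z. f k z - h z) + tent_int \<alpha> p s \<mu> (E k) h)" for k
    unfolding K_def using h by (intro tent_int_triangle assms(1-5) f) (auto simp: tent_space_def)
  show ?thesis
  proof (rule tendsto_sandwich[where f = "\<lambda>_. 0"])
    show "eventually (\<lambda>k. tent_int \<alpha> p s \<mu> (E k) (f k) \<le>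
        K * (tent_int \<alpha> p s \<mu> UNIV (\<lambda>z. f k z - h z) + tent_int \<alpha> p s \<mu> (E k) h)) sequentially"
      using bound by (rule always_eventually[OF allI])
  qed (use lim in simp_all)
qed

lemma tent_rel_compact_tendsto_zero_subseq:
  assumes "sigma_finite_measure \<mu>" "sets \<mu> = sets borel" "0 < p" "0 < s"
    and E: "\<And>k. E k \<in> sets borel"
    and leave: "\<And>z. z \<in> ball 0 1 \<Longrightarrow> eventually (\<lambda>k. z \<notin> E k) sequentially"
    and "G \<subseteq> tent_space \<alpha> p s \<mu>" "tent_rel_compact \<alpha> p s \<mu> G" "\<And>k. f k \<in> G"
  shows "\<exists>\<sigma>. strict_mono \<sigma> \<and> (\<lambda>j. tent_int \<alpha> p s \<mu> (E (\<sigma> j)) (f (\<sigma> j))) \<longlonglongrightarrow> 0"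
proof -
  obtain h \<sigma> where h: "h \<in> tent_space \<alpha> p s \<mu>" and \<sigma>: "strict_mono \<sigma>"
    and conv: "(\<lambda>j. tent_int \<alpha> p s \<mu> UNIV (\<lambda>z. f (\<sigma> j) z - h z)) \<longlonglongrightarrow> 0"
    using assms(8,9) unfolding tent_rel_compact_def by blast
  have "eventually (\<lambda>j. z \<notin> E (\<sigma> j)) sequentially" if "z \<in> ball 0 1" for z
    using filterlim_iff[THEN iffD1, OF filterlim_subseq[OF \<sigma>]] leave[OF that] by blast
  moreover have "f (\<sigma> j) \<in> borel_measurable \<mu>" for j
    using assms(7,9) by (auto simp: tent_space_def)
  ultimately have "(\<lambda>j. tent_int \<alpha> p s \<mu> (E (\<sigma> j)) (f (\<sigma> j))) \<longlonglongrightarrow> 0"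
    by (rule tent_int_tendsto_zero_of_convergent[OF assms(1-4) E _ _ h conv])
  with \<sigma> show ?thesis
    by blast
qed

theorem lemma5p3:
  fixes \<mu> :: "(complex^'n) measure"
    and G :: "(complex^'n \<Rightarrow> complex) set"
    and \<alpha> p s \<epsilon> :: real
  assumes "\<alpha> > 1" and "0 < p" and "0 < s"
    and "sets \<mu> = sets borel" and "finite_measure \<mu>"
    and "emeasure \<mu> (- ball 0 1) = 0"
    and "G \<subseteq> tent_space \<alpha> p s \<mu>"
    and "tent_rel_compact \<alpha> p s \<mu> G"
    and "\<epsilon> > 0"
  shows "\<exists>r. 0 < r \<and> r < 1 \<and>
           (SUP g\<in>G. tent_int \<alpha> p s \<mu> (- cball 0 r) g) < ennreal \<epsilon>"
proof (rule ccontr)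
  assume contra: "\<not> ?thesis"
  define r :: "nat \<Rightarrow> real" where "r k = 1 - inverse (real (Suc k)) / 2" for k
  have "\<exists>g\<in>G. ennreal (\<epsilon> / 2) < tent_int \<alpha> p s \<mu> (- cball 0 (r k)) g" for k
  proof -
    have "0 < r k" "r k < 1"
      by (auto simp: r_def field_simps)
    have "ennreal (\<epsilon> / 2) < ennreal \<epsilon>"
      using \<open>\<epsilon> > 0\<close> by (simp add: ennreal_lessI)
    also have "\<dots> \<le> (SUP g\<in>G. tent_int \<alpha> p s \<mu> (- cball 0 (r k)) g)"
      using contra \<open>0 < r k\<close> \<open>r k < 1\<close> by (meson not_less)
    finally show ?thesis
      by (simp add: less_SUP_iff)
  qed
  then obtain f where f: "\<And>k. f k \<in> G"
    and large: "\<And>k. ennreal (\<epsilon> / 2) < tent_int \<alpha> p s \<mu> (- cball 0 (r k)) (f k)"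
    by metis
  have "r \<longlonglongrightarrow> 1 - 0 / 2"
    unfolding r_def by (intro LIMSEQ_inverse_real_of_nat tendsto_intros) simp
  then have "r \<longlonglongrightarrow> 1"
    by simp
  then have leave: "eventually (\<lambda>k. z \<notin> - cball 0 (r k)) sequentially"
    if "z \<in> ball (0 :: complex^'n) 1" for z
    using that order_tendstoD(1)[of r 1 sequentially "norm z"] by (auto elim: eventually_mono)
  have tails: "- cball 0 (r k) \<in> sets borel" for k
    by (intro borel_comp borel_closed closed_cball)
  have "sigma_finite_measure \<mu>"
    using \<open>finite_measure \<mu>\<close> by (rule finite_measure.axioms(1))
  then obtain \<sigma> where "(\<lambda>j. tent_int \<alpha> p s \<mu> (- cball 0 (r (\<sigma> j))) (f (\<sigma> j))) \<longlonglongrightarrow> 0"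
    using tent_rel_compact_tendsto_zero_subseq[where E = "\<lambda>k. - cball 0 (r k)" and f = f,
        OF _ assms(4,2,3) tails leave assms(7,8) f]
    by blast
  then have "eventually (\<lambda>j. tent_int \<alpha> p s \<mu> (- cball 0 (r (\<sigma> j))) (f (\<sigma> j)) < ennreal (\<epsilon> / 2))
      sequentially"
    by (rule order_tendstoD(2)) (simp add: \<open>\<epsilon> > 0\<close>)
  then obtain j where "tent_int \<alpha> p s \<mu> (- cball 0 (r (\<sigma> j))) (f (\<sigma> j)) < ennreal (\<epsilon> / 2)"
    by (auto simp: eventually_sequentially)
  with large[of "\<sigma> j"] show False
    by (rule less_asym)
qed

end
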